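(* Let $\Sigma=(X,\mathcal{S},\phi)$ be a forward complete dynamical system whose transition map $\phi$ is $\mathcal{S}$-uniformly continuous. Assume $\Sigma$ is USGES, and let $r\mapsto M(r)>0$, $r\mapsto\lambda(r)>0$ be functions such that $\|\phi(t,x,\sigma)\|\le M(r)e^{-\lambda(r)t}\|x\|$ for all $r>0$, $t\ge0$, $x\in B_X(0,r)$, $\sigma\in\mathcal{S}$. Then for every $r>0$ there exist $\underline{c}_r,\overline{c}_r>0$ and a continuous functional $V_r:X\to\mathbb{R}_+$ such that $$\underline{c}_r\|x\|\le V_r(x)\le\overline{c}_r\|x\|\quad\forall x\in B_X(0,r),$$ $$\overline{D}_\sigma V_r(x)\le-\|x\|\quad\forall x\in B_X(0,r),\ \forall\sigma\in\mathcal{S},$$ and $V_r=V_R$ on $X$ for every $R>0$ such that $\lambda(r)=\lambda(R)$ and $M(r)=M(R)$. Moreover, if $\phi$ is $\mathcal{S}$-uniformly Lipschitz continuous (respectively, $\mathcal{S}$-uniformly Lipschitz continuous on bounded sets), then $V_r$ can be taken Lipschitz continuous (respectively, Lipschitz continuous on bounded sets).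
   Context: $(X,\|\cdot\|)$ is a Banach space and $B_X(x,r)$ is the closed ball of center $x$ and radius $r$. Let $\mathcal{Q}$ be a nonempty set and $\mathcal{S}$ a set of functions $\sigma:\mathbb{R}_+\to\mathcal{Q}$ closed by time-shift (for $\sigma\in\mathcal{S}$, $\tau\ge0$, $\mathbb{T}_\tau\sigma:s\mapsto\sigma(\tau+s)$ is in $\mathcal{S}$) and by concatenation (for $\sigma_1,\sigma_2\in\mathcal{S}$, $\tau>0$, the function equal to $\sigma_1$ on $[0,\tau]$ and with $\sigma(\tau+t)=\sigma_2(t)$ for $t>0$ is in $\mathcal{S}$). A triple $\Sigma=(X,\mathcal{S},\phi)$ with $\phi:\mathbb{R}_+\times X\times\mathcal{S}\to X$ is a forward complete dynamical system if: $\phi(0,x,\sigma)=x$; $\phi(t,x,\tilde\sigma)=\phi(t,x,\sigma)$ whenever $\tilde\sigma=\sigma$ on $[0,t]$; $t\mapsto\phi(t,x,\sigma)$ is continuous; $\phi(\tau,\phi(t,x,\sigma),\mathbb{T}_t\sigma)=\phi(t+\tau,x,\sigma)$ for all $t,\tau\ge0$. $\Sigma$ is USGES if for every $r>0$ there exist $M(r),\lambda(r)>0$ with $\|\phi(t,x,\sigma)\|\le M(r)e^{-\lambda(r)t}\|x\|$ for all $t\ge0$, $x\in B_X(0,r)$, $\sigma\in\mathcal{S}$. The upper Dini derivative is $\overline{D}_\sigma V(x)=\limsup_{h\downarrow0}\frac1h\big(V(\phi(h,x,\sigma))-V(x)\big)$. $\phi$ is $\mathcal{S}$-uniformly continuous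 if for every $\bar t>0$, $x\in X$, $\varepsilon>0$ there is $\eta>0$ with $\|\phi(t,x,\sigma)-\phi(t,y,\sigma)\|\le\varepsilon$ for all $t\in[0,\bar t]$, $y\in B_X(x,\eta)$, $\sigma\in\mathcal{S}$. $\phi$ is $\mathcal{S}$-uniformly Lipschitz continuous if for every $\bar t>0$ there is $l(\bar t)>0$ with $\|\phi(t,x,\sigma)-\phi(t,y,\sigma)\|\le l(\bar t)\|x-y\|$ for all $t\in[0,\bar t]$, $x,y\in X$, $\sigma\in\mathcal{S}$; it is $\mathcal{S}$-uniformly Lipschitz continuous on bounded sets if for every $\bar t,R>0$ there is $l(\bar t,R)>0$ with the same inequality for all $t\in[0,\bar t]$, $x,y\in B_X(0,R)$, $\sigma\in\mathcal{S}$. *)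

theory Defs
  imports "HOL-Analysis.Analysis"
begin

text \<open>Input signals sigma : R_+ -> Q are represented as functions real => 'q;
  only their values on [0, inf) are relevant.\<close>

definition tshift :: "real \<Rightarrow> (real \<Rightarrow> 'q) \<Rightarrow> (real \<Rightarrow> 'q)" where
  "tshift \<tau> \<sigma> = (\<lambda>s. \<sigma> (\<tau> + s))"

definition concat_sig :: "(real \<Rightarrow> 'q) \<Rightarrow> real \<Rightarrow> (real \<Rightarrow> 'q) \<Rightarrow> (real \<Rightarrow> 'q)" where
  "concat_sig \<sigma>1 \<tau> \<sigma>2 = (\<lambda>t. if t \<le> \<tau> then \<sigma>1 t else \<sigma>2 (t - \<tau>))"

definition admissible_inputs :: "(real \<Rightarrow> 'q) set \<Rightarrow> bool" where
  "admissible_inputs S \<longleftrightarrow>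
     (\<forall>\<sigma>\<in>S. \<forall>\<tau>\<ge>0. tshift \<tau> \<sigma> \<in> S) \<and>
     (\<forall>\<sigma>1\<in>S. \<forall>\<sigma>2\<in>S. \<forall>\<tau>>0. concat_sig \<sigma>1 \<tau> \<sigma>2 \<in> S)"

definition forward_complete_sys ::
  "(real \<Rightarrow> 'q) set \<Rightarrow> (real \<Rightarrow> 'x::real_normed_vector \<Rightarrow> (real \<Rightarrow> 'q) \<Rightarrow> 'x) \<Rightarrow> bool" where
  "forward_complete_sys S \<phi> \<longleftrightarrow>
     admissible_inputs S \<and>
     (\<forall>x. \<forall>\<sigma>\<in>S. \<phi> 0 x \<sigma> = x) \<and>
     (\<forall>t\<ge>0. \<forall>x. \<forall>\<sigma>\<in>S. \<forall>\<sigma>'\<in>S. (\<forall>s\<in>{0..t}. \<sigma>' s = \<sigma> s) \<longrightarrow> \<phi> t x \<sigma>' = \<phi> t x \<sigma>) \<and>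
     (\<forall>x. \<forall>\<sigma>\<in>S. continuous_on {0..} (\<lambda>t. \<phi> t x \<sigma>)) \<and>
     (\<forall>t\<ge>0. \<forall>\<tau>\<ge>0. \<forall>x. \<forall>\<sigma>\<in>S. \<phi> \<tau> (\<phi> t x \<sigma>) (tshift t \<sigma>) = \<phi> (t + \<tau>) x \<sigma>)"

definition USGES ::
  "(real \<Rightarrow> 'q) set \<Rightarrow> (real \<Rightarrow> 'x::real_normed_vector \<Rightarrow> (real \<Rightarrow> 'q) \<Rightarrow> 'x) \<Rightarrow> bool" where
  "USGES S \<phi> \<longleftrightarrow> (\<forall>r>0. \<exists>M>0. \<exists>lam>0. \<forall>t\<ge>0. \<forall>x\<in>cball 0 r. \<forall>\<sigma>\<in>S.
      norm (\<phi> t x \<sigma>) \<le> M * exp (- lam * t) * norm x)"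

definition S_unif_cont ::
  "(real \<Rightarrow> 'q) set \<Rightarrow> (real \<Rightarrow> 'x::real_normed_vector \<Rightarrow> (real \<Rightarrow> 'q) \<Rightarrow> 'x) \<Rightarrow> bool" where
  "S_unif_cont S \<phi> \<longleftrightarrow> (\<forall>tb>0. \<forall>x. \<forall>\<epsilon>>0. \<exists>\<eta>>0. \<forall>t\<in>{0..tb}. \<forall>y\<in>cball x \<eta>. \<forall>\<sigma>\<in>S.
      norm (\<phi> t x \<sigma> - \<phi> t y \<sigma>) \<le> \<epsilon>)"

definition S_unif_lip ::
  "(real \<Rightarrow> 'q) set \<Rightarrow> (real \<Rightarrow> 'x::real_normed_vector \<Rightarrow> (real \<Rightarrow> 'q) \<Rightarrow> 'x) \<Rightarrow> bool" where
  "S_unif_lip S \<phi> \<longleftrightarrow> (\<forall>tb>0. \<exists>l>0. \<forall>t\<in>{0..tb}. \<forall>x y. \<forall>\<sigma>\<in>S.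
      norm (\<phi> t x \<sigma> - \<phi> t y \<sigma>) \<le> l * norm (x - y))"

definition S_unif_lip_bdd ::
  "(real \<Rightarrow> 'q) set \<Rightarrow> (real \<Rightarrow> 'x::real_normed_vector \<Rightarrow> (real \<Rightarrow> 'q) \<Rightarrow> 'x) \<Rightarrow> bool" where
  "S_unif_lip_bdd S \<phi> \<longleftrightarrow> (\<forall>tb>0. \<forall>R>0. \<exists>l>0. \<forall>t\<in>{0..tb}. \<forall>x\<in>cball 0 R. \<forall>y\<in>cball 0 R. \<forall>\<sigma>\<in>S.
      norm (\<phi> t x \<sigma> - \<phi> t y \<sigma>) \<le> l * norm (x - y))"

definition dini_upper ::
  "(real \<Rightarrow> 'x \<Rightarrow> (real \<Rightarrow> 'q) \<Rightarrow> 'x) \<Rightarrow> ('x \<Rightarrow> real) \<Rightarrow> (real \<Rightarrow> 'q) \<Rightarrow> 'x \<Rightarrow> ereal" where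
  "dini_upper \<phi> V \<sigma> x = Limsup (at_right 0) (\<lambda>h. ereal ((V (\<phi> h x \<sigma>) - V x) / h))"

definition lyap_family ::
  "(real \<Rightarrow> 'q) set \<Rightarrow> (real \<Rightarrow> 'x::real_normed_vector \<Rightarrow> (real \<Rightarrow> 'q) \<Rightarrow> 'x) \<Rightarrow>
   (real \<Rightarrow> real) \<Rightarrow> (real \<Rightarrow> real) \<Rightarrow> (real \<Rightarrow> 'x \<Rightarrow> real) \<Rightarrow> bool" where
  "lyap_family S \<phi> M lam V \<longleftrightarrow> (\<forall>r>0.
      continuous_on UNIV (V r) \<and> (\<forall>x. V r x \<ge> 0) \<and>
      (\<exists>cl>0. \<exists>cu>0. \<forall>x\<in>cball 0 r. cl * norm x \<le> V r x \<and> V r x \<le> cu * norm x) \<and>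
      (\<forall>x\<in>cball 0 r. \<forall>\<sigma>\<in>S. dini_upper \<phi> (V r) \<sigma> x \<le> ereal (- norm x)) \<and>
      (\<forall>R>0. lam r = lam R \<and> M r = M R \<longrightarrow> V r = V R))"

end

theory Submission
  imports Defs
begin

text \<open>\<open>V\<^sub>r\<close> is \<open>2/\<lambda>\<close> times the supremum of \<open>\<parallel>x\<parallel>\<close> and of \<open>e\<^sup>\<lambda>\<^sup>t\<^sup>/\<^sup>2 \<parallel>\<phi>(t,x,\<sigma>)\<parallel>\<close> over \<open>\<sigma> \<in> S\<close> and
  \<open>t\<close> in the finite window \<open>[0, 2M/\<lambda>]\<close>, with \<open>M = M(r)\<close>, \<open>\<lambda> = \<lambda>(r)\<close>. On the ball of radius \<open>r\<close>
  the window loses nothing: beyond it \<open>e\<^sup>\<lambda>\<^sup>t\<^sup>/\<^sup>2 \<ge> M\<close>, so the weighted norm is at most \<open>\<parallel>x\<parallel>\<close>.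
  Hence \<open>V\<^sub>r\<close> is comparable to \<open>\<parallel>x\<parallel>\<close>, and concatenating inputs gives
  \<open>V\<^sub>r(\<phi>(h,x,\<sigma>)) \<le> e\<^sup>-\<^sup>\<lambda>\<^sup>h\<^sup>/\<^sup>2 V\<^sub>r(x)\<close>, which yields the Dini bound. Because the window is finite,
  \<open>S\<close>-uniform (Lipschitz) continuity of \<open>\<phi>\<close> on bounded time intervals passes to \<open>V\<^sub>r\<close>.\<close>

lemma forward_complete_sysD:
  assumes "forward_complete_sys S \<phi>"
  shows tshift_in_inputs: "\<And>\<sigma> \<tau>. \<sigma> \<in> S \<Longrightarrow> \<tau> \<ge> 0 \<Longrightarrow> tshift \<tau> \<sigma> \<in> S"
    and concat_sig_in_inputs: "\<And>\<sigma>1 \<sigma>2 \<tau>. \<sigma>1 \<in> S \<Longrightarrow> \<sigma>2 \<in> S \<Longrightarrow> \<tau> > 0 \<Longrightarrow> concat_sig \<sigma>1 \<tau> \<sigma>2 \<in> S"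
    and flow_zero: "\<And>x \<sigma>. \<sigma> \<in> S \<Longrightarrow> \<phi> 0 x \<sigma> = x"
    and flow_causal: "\<And>t x \<sigma> \<sigma>'. t \<ge> 0 \<Longrightarrow> \<sigma> \<in> S \<Longrightarrow> \<sigma>' \<in> S \<Longrightarrow>
           (\<forall>s\<in>{0..t}. \<sigma>' s = \<sigma> s) \<Longrightarrow> \<phi> t x \<sigma>' = \<phi> t x \<sigma>"
    and continuous_on_flow: "\<And>x \<sigma>. \<sigma> \<in> S \<Longrightarrow> continuous_on {0..} (\<lambda>t. \<phi> t x \<sigma>)"
    and flow_cocycle: "\<And>t \<tau> x \<sigma>. t \<ge> 0 \<Longrightarrow> \<tau> \<ge> 0 \<Longrightarrow> \<sigma> \<in> S \<Longrightarrow>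
           \<phi> \<tau> (\<phi> t x \<sigma>) (tshift t \<sigma>) = \<phi> (t + \<tau>) x \<sigma>"
  using assms unfolding forward_complete_sys_def admissible_inputs_def by blast+

text \<open>Causality only identifies inputs that also agree at time 0, whereas a shifted concatenation
  \<open>tshift h (concat_sig \<sigma> h \<sigma>')\<close> differs from \<open>\<sigma>'\<close> exactly there. Flowing for a short time \<open>\<epsilon>\<close>
  first and using the shifted input \<open>tshift \<epsilon> \<rho>1\<close> for both trajectories removes the dependence
  on time 0, at the cost of two nearby initial states, which \<open>S\<close>-uniform continuity controls.\<close>

lemma flow_eq_if_inputs_agree_on_pos:
  fixes \<phi> :: "real \<Rightarrow> 'x::real_normed_vector \<Rightarrow> (real \<Rightarrow> 'q) \<Rightarrow> 'x"
  assumes fc: "forward_complete_sys S \<phi>" and uc: "S_unif_cont S \<phi>"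
    and t: "t > 0" and \<rho>1: "\<rho>1 \<in> S" and \<rho>2: "\<rho>2 \<in> S"
    and agree: "\<forall>s. 0 < s \<and> s \<le> t \<longrightarrow> \<rho>1 s = \<rho>2 s"
  shows "\<phi> t y \<rho>1 = \<phi> t y \<rho>2"
proof -
  have "norm (\<phi> t y \<rho>1 - \<phi> t y \<rho>2) \<le> 0 + e" if "e > 0" for e
  proof -
    from \<open>e > 0\<close> have "e / 2 > 0" by simp
    from uc[unfolded S_unif_cont_def, rule_format, OF t this, of y]
    obtain \<eta> where "\<eta> > 0"
      and \<eta>: "\<forall>s\<in>{0..t}. \<forall>z\<in>cball y \<eta>. \<forall>\<rho>\<in>S. norm (\<phi> s y \<rho> - \<phi> s z \<rho>) \<le> e / 2"
      by blast
    have near: "\<forall>\<^sub>F \<epsilon> in at_right 0. \<phi> \<epsilon> y \<rho> \<in> cball y \<eta>" if "\<rho> \<in> S" for \<rho>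
    proof -
      have "((\<lambda>s. \<phi> s y \<rho>) \<longlongrightarrow> \<phi> 0 y \<rho>) (at 0 within {0..})"
        using continuous_on_flow[OF fc that, of y] by (simp add: continuous_on_def)
      then have "((\<lambda>s. \<phi> s y \<rho>) \<longlongrightarrow> y) (at_right 0)"
        unfolding flow_zero[OF fc that] by (rule tendsto_within_subset) auto
      from tendstoD[OF this \<open>\<eta> > 0\<close>] show ?thesis
        by eventually_elim (simp add: dist_commute)
    qed
    have "\<forall>\<^sub>F \<epsilon> in at_right 0. \<epsilon> < t"
      using t by (auto simp: eventually_at_right_field)
    with eventually_at_right_less[of 0] near[OF \<rho>1] near[OF \<rho>2]
    have "\<forall>\<^sub>F \<epsilon> in at_right 0. 0 < \<epsilon> \<and> \<epsilon> < t
        \<and> \<phi> \<epsilon> y \<rho>1 \<in> cball y \<eta> \<and> \<phi> \<epsilon> y \<rho>2 \<in> cball y \<eta>"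
      by eventually_elim simp
    then obtain \<epsilon> where "0 < \<epsilon>" "\<epsilon> < t"
        and z1: "\<phi> \<epsilon> y \<rho>1 \<in> cball y \<eta>" and z2: "\<phi> \<epsilon> y \<rho>2 \<in> cball y \<eta>"
      by (auto dest: eventually_happens)
    define \<rho> where "\<rho> = tshift \<epsilon> \<rho>1"
    have "\<rho> \<in> S" "tshift \<epsilon> \<rho>2 \<in> S"
      using tshift_in_inputs[OF fc] \<rho>1 \<rho>2 \<open>0 < \<epsilon>\<close> by (auto simp: \<rho>_def)
    have "\<phi> t y \<rho>1 = \<phi> (t - \<epsilon>) (\<phi> \<epsilon> y \<rho>1) \<rho>"
      using flow_cocycle[OF fc, of \<epsilon> "t - \<epsilon>" \<rho>1 y] \<open>0 < \<epsilon>\<close> \<open>\<epsilon> < t\<close> \<rho>1 by (simp add: \<rho>_def)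
    moreover have "\<phi> t y \<rho>2 = \<phi> (t - \<epsilon>) (\<phi> \<epsilon> y \<rho>2) \<rho>"
    proof -
      have "\<phi> (t - \<epsilon>) z (tshift \<epsilon> \<rho>2) = \<phi> (t - \<epsilon>) z \<rho>" for z
        using flow_causal[OF fc, of "t - \<epsilon>" \<rho> "tshift \<epsilon> \<rho>2"] \<open>\<rho> \<in> S\<close> \<open>tshift \<epsilon> \<rho>2 \<in> S\<close>
          \<open>0 < \<epsilon>\<close> \<open>\<epsilon> < t\<close> agree
        by (auto simp: \<rho>_def tshift_def)
      then show ?thesis
        using flow_cocycle[OF fc, of \<epsilon> "t - \<epsilon>" \<rho>2 y] \<open>0 < \<epsilon>\<close> \<open>\<epsilon> < t\<close> \<rho>2 by simp
    qed
    ultimately have "\<phi> t y \<rho>1 - \<phi> t y \<rho>2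
        = (\<phi> (t - \<epsilon>) y \<rho> - \<phi> (t - \<epsilon>) (\<phi> \<epsilon> y \<rho>2) \<rho>) - (\<phi> (t - \<epsilon>) y \<rho> - \<phi> (t - \<epsilon>) (\<phi> \<epsilon> y \<rho>1) \<rho>)"
      by simp
    also have "norm \<dots> \<le> norm (\<phi> (t - \<epsilon>) y \<rho> - \<phi> (t - \<epsilon>) (\<phi> \<epsilon> y \<rho>2) \<rho>)
        + norm (\<phi> (t - \<epsilon>) y \<rho> - \<phi> (t - \<epsilon>) (\<phi> \<epsilon> y \<rho>1) \<rho>)"
      by (rule norm_triangle_ineq4)
    also have "\<dots> \<le> e / 2 + e / 2"
      using \<eta> z1 z2 \<open>\<rho> \<in> S\<close> \<open>0 < \<epsilon>\<close> \<open>\<epsilon> < t\<close> by (intro add_mono) simp_all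
    finally show ?thesis
      by simp
  qed
  then have "norm (\<phi> t y \<rho>1 - \<phi> t y \<rho>2) \<le> 0"
    by (rule field_le_epsilon)
  then show ?thesis
    by simp
qed

lemma flow_concat_sig:
  fixes \<phi> :: "real \<Rightarrow> 'x::real_normed_vector \<Rightarrow> (real \<Rightarrow> 'q) \<Rightarrow> 'x"
  assumes fc: "forward_complete_sys S \<phi>" and uc: "S_unif_cont S \<phi>"
    and "h > 0" "t \<ge> 0" "\<sigma> \<in> S" "\<sigma>' \<in> S"
  shows "\<phi> t (\<phi> h x \<sigma>) \<sigma>' = \<phi> (h + t) x (concat_sig \<sigma> h \<sigma>')"
proof -
  let ?\<sigma> = "concat_sig \<sigma> h \<sigma>'"
  have "?\<sigma> \<in> S" "tshift h ?\<sigma> \<in> S"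
    using assms concat_sig_in_inputs[OF fc] tshift_in_inputs[OF fc] by auto
  have "\<phi> h x ?\<sigma> = \<phi> h x \<sigma>"
    using flow_causal[OF fc, of h \<sigma> ?\<sigma>] assms \<open>?\<sigma> \<in> S\<close> by (simp add: concat_sig_def)
  moreover have "\<phi> t z (tshift h ?\<sigma>) = \<phi> t z \<sigma>'" for z
  proof (cases "t = 0")
    case True
    then show ?thesis
      using flow_zero[OF fc] \<open>tshift h ?\<sigma> \<in> S\<close> \<open>\<sigma>' \<in> S\<close> by simp
  next
    case False
    then show ?thesis
      using flow_eq_if_inputs_agree_on_pos[OF fc uc _ \<open>tshift h ?\<sigma> \<in> S\<close> \<open>\<sigma>' \<in> S\<close>] assms
      by (simp add: concat_sig_def tshift_def)
  qed
  ultimately show ?thesis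
    using flow_cocycle[OF fc, of h t ?\<sigma> x] assms \<open>?\<sigma> \<in> S\<close> by simp
qed

lemma cSUP_abs_diff_le:
  fixes f g :: "'a \<Rightarrow> real"
  assumes "J \<noteq> {}" "bdd_above (f ` J)" "bdd_above (g ` J)" "\<And>j. j \<in> J \<Longrightarrow> \<bar>f j - g j\<bar> \<le> d"
  shows "\<bar>(SUP j\<in>J. f j) - (SUP j\<in>J. g j)\<bar> \<le> d"
proof -
  have "(SUP j\<in>J. f j) \<le> (SUP j\<in>J. g j) + d"
    using assms by (intro cSUP_least) (force dest: cSUP_upper[OF _ assms(3)])+
  moreover have "(SUP j\<in>J. g j) \<le> (SUP j\<in>J. f j) + d"
    using assms by (intro cSUP_least) (force dest: cSUP_upper[OF _ assms(2)])+
  ultimately show ?thesis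
    by linarith
qed

lemma dini_upper_le_of_exp_decrease:
  assumes "\<And>h. h > 0 \<Longrightarrow> V (\<phi> h x \<sigma>) \<le> exp (- a * h) * V x"
  shows "dini_upper \<phi> V \<sigma> x \<le> ereal (- a * V x)"
proof -
  have "((\<lambda>h. (exp (- a * h) - 1) / h) \<longlongrightarrow> - a) (at_right 0)"
  proof -
    have "((\<lambda>h. exp (- a * h)) has_field_derivative - a) (at 0 within {0<..})"
      by (auto intro!: derivative_eq_intros)
    then show ?thesis
      by (simp add: has_field_derivative_iff)
  qed
  then have "((\<lambda>h. ereal (V x * ((exp (- a * h) - 1) / h))) \<longlongrightarrow> ereal (V x * - a)) (at_right 0)"
    unfolding lim_ereal by (rule tendsto_mult_left)
  moreover have "\<forall>\<^sub>F h in at_right 0.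
      ereal ((V (\<phi> h x \<sigma>) - V x) / h) \<le> ereal (V x * ((exp (- a * h) - 1) / h))"
    using eventually_at_right_less
  proof eventually_elim
    case (elim h)
    then have "(V (\<phi> h x \<sigma>) - V x) / h \<le> (exp (- a * h) * V x - V x) / h"
      using assms by (intro divide_right_mono) auto
    then show ?case
      by (simp add: algebra_simps)
  qed
  ultimately have "dini_upper \<phi> V \<sigma> x \<le> Limsup (at_right 0) (\<lambda>h. ereal (V x * ((exp (- a * h) - 1) / h)))"
    unfolding dini_upper_def by (intro Limsup_mono) auto
  also have "\<dots> = ereal (V x * - a)"
    by (rule lim_imp_Limsup[OF trivial_limit_at_right_real]) fact
  finally show ?thesis
    by (simp add: mult.commute)
qed

definition exp_decay_on ::
  "(real \<Rightarrow> 'q) set \<Rightarrow> (real \<Rightarrow> 'x::real_normed_vector \<Rightarrow> (real \<Rightarrow> 'q) \<Rightarrow> 'x) \<Rightarrow> real \<Rightarrow> real \<Rightarrow> real \<Rightarrow> bool"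
  where "exp_decay_on S \<phi> r M lam \<longleftrightarrow>
    (\<forall>t\<ge>0. \<forall>x\<in>cball 0 r. \<forall>\<sigma>\<in>S. norm (\<phi> t x \<sigma>) \<le> M * exp (- lam * t) * norm x)"

lemma exp_decay_onD:
  "exp_decay_on S \<phi> r M lam \<Longrightarrow> t \<ge> 0 \<Longrightarrow> x \<in> cball 0 r \<Longrightarrow> \<sigma> \<in> S \<Longrightarrow>
    norm (\<phi> t x \<sigma>) \<le> M * exp (- lam * t) * norm x"
  unfolding exp_decay_on_def by blast

text \<open>The index \<open>None\<close> stands for the term \<open>norm x\<close>; it keeps the supremum defined, and
  at least \<open>norm x\<close>, even when \<open>S\<close> is empty.\<close>

definition horizon_index :: "(real \<Rightarrow> 'q) set \<Rightarrow> real \<Rightarrow> (real \<times> (real \<Rightarrow> 'q)) option set"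
  where "horizon_index S T = insert None (Some ` ({0..T} \<times> S))"

definition weighted_norm ::
  "(real \<Rightarrow> 'x::real_normed_vector \<Rightarrow> (real \<Rightarrow> 'q) \<Rightarrow> 'x) \<Rightarrow> real \<Rightarrow> 'x \<Rightarrow> (real \<times> (real \<Rightarrow> 'q)) option \<Rightarrow> real"
  where "weighted_norm \<phi> a x j =
    (case j of None \<Rightarrow> norm x | Some (t, \<sigma>) \<Rightarrow> exp (a * t) * norm (\<phi> t x \<sigma>))"

definition trajectory_sup ::
  "(real \<Rightarrow> 'x::real_normed_vector \<Rightarrow> (real \<Rightarrow> 'q) \<Rightarrow> 'x) \<Rightarrow> (real \<Rightarrow> 'q) set \<Rightarrow> real \<Rightarrow> real \<Rightarrow> 'x \<Rightarrow> real"
  where "trajectory_sup \<phi> S a T x = (SUP j\<in>horizon_index S T. weighted_norm \<phi> a x j)"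

text \<open>The horizon \<open>2 M / \<lambda>\<close> is \<open>M / a\<close> for the weight rate \<open>a = \<lambda> / 2\<close>, as required by
  \<open>exp_weighted_norm_le_trajectory_sup\<close>; the factor \<open>2 / \<lambda>\<close> turns the decay rate \<open>\<lambda> / 2\<close>
  of the supremum into the Dini bound \<open>-\<parallel>x\<parallel>\<close>.\<close>

definition lyapunov_functional ::
  "(real \<Rightarrow> 'x::real_normed_vector \<Rightarrow> (real \<Rightarrow> 'q) \<Rightarrow> 'x) \<Rightarrow> (real \<Rightarrow> 'q) set \<Rightarrow> real \<Rightarrow> real \<Rightarrow> 'x \<Rightarrow> real"
  where "lyapunov_functional \<phi> S M lam x = 2 / lam * trajectory_sup \<phi> S (lam / 2) (2 * M / lam) x"

lemma horizon_index_cases: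
  assumes "j \<in> horizon_index S T"
  obtains (none) "j = None" | (some) t \<sigma> where "j = Some (t, \<sigma>)" "0 \<le> t" "t \<le> T" "\<sigma> \<in> S"
  using assms unfolding horizon_index_def by auto

lemma horizon_index_nonempty: "horizon_index S T \<noteq> {}"
  by (simp add: horizon_index_def)

context
  fixes S :: "(real \<Rightarrow> 'q) set" and \<phi> :: "real \<Rightarrow> 'x::real_normed_vector \<Rightarrow> (real \<Rightarrow> 'q) \<Rightarrow> 'x"
  assumes usges: "USGES S \<phi>"
begin

lemma bdd_above_weighted_norm: "bdd_above (weighted_norm \<phi> a x ` horizon_index S T)"
proof -
  have "norm x + 1 > 0"
    by (rule add_nonneg_pos) simp_all
  then obtain M lam where "M > 0" "lam > 0" and decay: "exp_decay_on S \<phi> (norm x + 1) M lam"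
    using usges unfolding USGES_def exp_decay_on_def by blast
  have "weighted_norm \<phi> a x j \<le> max (norm x) (exp (\<bar>a\<bar> * T) * (M * norm x))"
    if "j \<in> horizon_index S T" for j
    using that
  proof (cases rule: horizon_index_cases)
    case (some t \<sigma>)
    have "a * t \<le> \<bar>a\<bar> * T"
      using some by (metis abs_ge_self abs_ge_zero mult_mono)
    moreover have "norm (\<phi> t x \<sigma>) \<le> M * norm x"
    proof -
      have "norm (\<phi> t x \<sigma>) \<le> M * exp (- lam * t) * norm x"
        using exp_decay_onD[OF decay] some by simp
      also have "\<dots> \<le> M * 1 * norm x"
        using some \<open>M > 0\<close> \<open>lam > 0\<close> by (intro mult_right_mono mult_left_mono) auto
      finally show ?thesis by simp
    qed
    ultimately show ?thesis
      using some by (simp add: weighted_norm_def max.coboundedI2 mult_mono)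
  qed (simp add: weighted_norm_def)
  then show ?thesis
    by (rule bdd_aboveI2)
qed

lemma weighted_norm_le_trajectory_sup:
  "j \<in> horizon_index S T \<Longrightarrow> weighted_norm \<phi> a x j \<le> trajectory_sup \<phi> S a T x"
  unfolding trajectory_sup_def by (rule cSUP_upper[OF _ bdd_above_weighted_norm])

lemma norm_le_trajectory_sup: "norm x \<le> trajectory_sup \<phi> S a T x"
  using weighted_norm_le_trajectory_sup[of None] by (simp add: horizon_index_def weighted_norm_def)

lemma trajectory_sup_le:
  assumes decay: "exp_decay_on S \<phi> r M lam" and "M > 0" "a \<le> lam" and x: "x \<in> cball 0 r"
  shows "trajectory_sup \<phi> S a T x \<le> max 1 M * norm x"
  unfolding trajectory_sup_def
proof (rule cSUP_least[OF horizon_index_nonempty])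
  fix j assume "j \<in> horizon_index S T"
  then show "weighted_norm \<phi> a x j \<le> max 1 M * norm x"
  proof (cases rule: horizon_index_cases)
    case none
    have "1 * norm x \<le> max 1 M * norm x"
      by (intro mult_right_mono) simp_all
    with none show ?thesis
      by (simp add: weighted_norm_def)
  next
    case (some t \<sigma>)
    have "weighted_norm \<phi> a x j \<le> exp (a * t) * (M * exp (- lam * t) * norm x)"
      using exp_decay_onD[OF decay _ x] some by (simp add: weighted_norm_def mult.assoc)
    also have "\<dots> = M * exp ((a - lam) * t) * norm x"
      by (simp add: algebra_simps flip: exp_add)
    also have "\<dots> \<le> M * 1 * norm x"
      using some \<open>M > 0\<close> \<open>a \<le> lam\<close> by (intro mult_right_mono mult_left_mono) (auto simp: mult_nonpos_nonneg)
    also have "\<dots> \<le> max 1 M * norm x"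
      by (simp add: mult_right_mono)
    finally show ?thesis .
  qed
qed

text \<open>Past the horizon \<open>T \<ge> M / a\<close> one has \<open>M \<le> a t \<le> e\<^sup>a\<^sup>t\<close>, so the weighted norm is at most
  \<open>M e\<^sup>-\<^sup>a\<^sup>t \<parallel>x\<parallel> \<le> \<parallel>x\<parallel>\<close>: the supremum over \<open>[0, T]\<close> already dominates all times.\<close>

lemma exp_weighted_norm_le_trajectory_sup:
  assumes decay: "exp_decay_on S \<phi> r M lam" and "M > 0" "a > 0" "2 * a \<le> lam" "M \<le> a * T"
    and x: "x \<in> cball 0 r" and "t \<ge> 0" "\<sigma> \<in> S"
  shows "exp (a * t) * norm (\<phi> t x \<sigma>) \<le> trajectory_sup \<phi> S a T x"
proof (cases "t \<le> T")
  case True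
  then have "Some (t, \<sigma>) \<in> horizon_index S T"
    using assms by (simp add: horizon_index_def)
  from weighted_norm_le_trajectory_sup[OF this] show ?thesis
    by (simp add: weighted_norm_def)
next
  case False
  have "M \<le> exp (a * t)"
    using \<open>M \<le> a * T\<close> False \<open>a > 0\<close> exp_ge_add_one_self[of "a * t"]
    by (smt (verit) mult_strict_left_mono)
  have "exp (a * t) * norm (\<phi> t x \<sigma>) \<le> exp (a * t) * (M * exp (- lam * t) * norm x)"
    using exp_decay_onD[OF decay _ x] assms by (intro mult_left_mono) simp_all
  also have "\<dots> \<le> exp (a * t) * (M * exp (- (2 * a) * t) * norm x)"
    using assms by (intro mult_left_mono mult_right_mono) (auto intro: mult_right_mono)
  also have "\<dots> = (M * exp (- (a * t))) * norm x"
    by (simp add: algebra_simps flip: exp_add)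
  also have "\<dots> \<le> 1 * norm x"
    using \<open>M \<le> exp (a * t)\<close> by (intro mult_right_mono) (simp_all add: exp_minus field_simps)
  also have "\<dots> \<le> trajectory_sup \<phi> S a T x"
    using norm_le_trajectory_sup by simp
  finally show ?thesis .
qed

lemma trajectory_sup_abs_diff_le:
  assumes "a \<ge> 0" and "\<And>t \<sigma>. t \<in> {0..T} \<Longrightarrow> \<sigma> \<in> S \<Longrightarrow> norm (\<phi> t x \<sigma> - \<phi> t y \<sigma>) \<le> d"
  shows "\<bar>trajectory_sup \<phi> S a T x - trajectory_sup \<phi> S a T y\<bar> \<le> max (norm (x - y)) (exp (a * T) * d)"
  unfolding trajectory_sup_def
proof (rule cSUP_abs_diff_le[OF horizon_index_nonempty bdd_above_weighted_norm bdd_above_weighted_norm])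
  fix j assume "j \<in> horizon_index S T"
  then show "\<bar>weighted_norm \<phi> a x j - weighted_norm \<phi> a y j\<bar> \<le> max (norm (x - y)) (exp (a * T) * d)"
  proof (cases rule: horizon_index_cases)
    case none
    then show ?thesis
      by (simp add: weighted_norm_def norm_triangle_ineq3 max.coboundedI1)
  next
    case (some t \<sigma>)
    have "\<bar>weighted_norm \<phi> a x j - weighted_norm \<phi> a y j\<bar>
        = exp (a * t) * \<bar>norm (\<phi> t x \<sigma>) - norm (\<phi> t y \<sigma>)\<bar>"
      using some by (simp add: weighted_norm_def abs_mult flip: right_diff_distrib)
    also have "\<dots> \<le> exp (a * T) * d"
      using some assms by (intro mult_mono order_trans[OF norm_triangle_ineq3]) (auto intro: mult_left_mono)
    finally show ?thesis
      by (simp add: max.coboundedI2)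
  qed
qed

lemma continuous_on_trajectory_sup:
  assumes uc: "S_unif_cont S \<phi>" and "a \<ge> 0" "T > 0"
  shows "continuous_on UNIV (trajectory_sup \<phi> S a T)"
  unfolding continuous_on_iff
proof (intro ballI allI impI)
  fix x :: 'x and e :: real assume "e > 0"
  then have "e / (2 * exp (a * T)) > 0"
    by simp
  from uc[unfolded S_unif_cont_def, rule_format, OF \<open>T > 0\<close> this, of x]
  obtain \<eta> where "\<eta> > 0"
    and \<eta>: "\<forall>t\<in>{0..T}. \<forall>y\<in>cball x \<eta>. \<forall>\<sigma>\<in>S. norm (\<phi> t x \<sigma> - \<phi> t y \<sigma>) \<le> e / (2 * exp (a * T))"
    by blast
  show "\<exists>d>0. \<forall>y\<in>UNIV. dist y x < d \<longrightarrow> dist (trajectory_sup \<phi> S a T y) (trajectory_sup \<phi> S a T x) < e"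
  proof (intro exI conjI ballI impI)
    show "min \<eta> (e / 2) > 0"
      using \<open>\<eta> > 0\<close> \<open>e > 0\<close> by simp
    fix y assume "dist y x < min \<eta> (e / 2)"
    then have "y \<in> cball x \<eta>" "norm (x - y) < e / 2"
      by (simp_all add: dist_norm norm_minus_commute)
    then have "\<bar>trajectory_sup \<phi> S a T x - trajectory_sup \<phi> S a T y\<bar> \<le> max (norm (x - y)) (e / 2)"
      using trajectory_sup_abs_diff_le[OF \<open>a \<ge> 0\<close>, of T x y "e / (2 * exp (a * T))"] \<eta> by simp
    also have "\<dots> < e"
      using \<open>norm (x - y) < e / 2\<close> \<open>e > 0\<close> by simp
    finally show "dist (trajectory_sup \<phi> S a T y) (trajectory_sup \<phi> S a T x) < e"
      by (simp add: dist_real_def abs_minus_commute)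
  qed
qed

lemma lipschitz_on_trajectory_sup:
  assumes "a \<ge> 0" "c \<ge> 0"
    and "\<And>t x y \<sigma>. t \<in> {0..T} \<Longrightarrow> x \<in> B \<Longrightarrow> y \<in> B \<Longrightarrow> \<sigma> \<in> S \<Longrightarrow>
           norm (\<phi> t x \<sigma> - \<phi> t y \<sigma>) \<le> c * norm (x - y)"
  shows "(max 1 (exp (a * T) * c))-lipschitz_on B (trajectory_sup \<phi> S a T)"
proof (rule lipschitz_onI)
  fix x y assume "x \<in> B" "y \<in> B"
  then have "\<bar>trajectory_sup \<phi> S a T x - trajectory_sup \<phi> S a T y\<bar>
      \<le> max (norm (x - y)) (exp (a * T) * (c * norm (x - y)))"
    using assms by (intro trajectory_sup_abs_diff_le) auto
  also have "\<dots> = max 1 (exp (a * T) * c) * norm (x - y)"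
    by (simp add: max_mult_distrib_right)
  finally show "dist (trajectory_sup \<phi> S a T x) (trajectory_sup \<phi> S a T y)
      \<le> max 1 (exp (a * T) * c) * dist x y"
    by (simp add: dist_real_def dist_norm)
qed simp

lemma trajectory_sup_flow_le:
  assumes fc: "forward_complete_sys S \<phi>" and uc: "S_unif_cont S \<phi>"
    and decay: "exp_decay_on S \<phi> r M lam" and "M > 0" "a > 0" "2 * a \<le> lam" "M \<le> a * T"
    and x: "x \<in> cball 0 r" and "\<sigma> \<in> S" "h > 0"
  shows "trajectory_sup \<phi> S a T (\<phi> h x \<sigma>) \<le> exp (- a * h) * trajectory_sup \<phi> S a T x"
  unfolding trajectory_sup_def[of _ _ _ _ "\<phi> h x \<sigma>"]
proof (rule cSUP_least[OF horizon_index_nonempty])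
  note tail = exp_weighted_norm_le_trajectory_sup
    [OF decay \<open>M > 0\<close> \<open>a > 0\<close> \<open>2 * a \<le> lam\<close> \<open>M \<le> a * T\<close> x]
  fix j assume "j \<in> horizon_index S T"
  then show "weighted_norm \<phi> a (\<phi> h x \<sigma>) j \<le> exp (- a * h) * trajectory_sup \<phi> S a T x"
  proof (cases rule: horizon_index_cases)
    case none
    have "weighted_norm \<phi> a (\<phi> h x \<sigma>) j = exp (- a * h) * (exp (a * h) * norm (\<phi> h x \<sigma>))"
      using none by (simp add: weighted_norm_def flip: mult.assoc exp_add)
    also have "\<dots> \<le> exp (- a * h) * trajectory_sup \<phi> S a T x"
      using tail \<open>\<sigma> \<in> S\<close> \<open>h > 0\<close> by (intro mult_left_mono) simp_all
    finally show ?thesis .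
  next
    case (some t \<sigma>')
    have "weighted_norm \<phi> a (\<phi> h x \<sigma>) j
        = exp (- a * h) * (exp (a * (h + t)) * norm (\<phi> (h + t) x (concat_sig \<sigma> h \<sigma>')))"
      using some flow_concat_sig[OF fc uc \<open>h > 0\<close> _ \<open>\<sigma> \<in> S\<close>, of t \<sigma>' x]
      by (simp add: weighted_norm_def algebra_simps flip: mult.assoc exp_add)
    also have "\<dots> \<le> exp (- a * h) * trajectory_sup \<phi> S a T x"
      using tail concat_sig_in_inputs[OF fc \<open>\<sigma> \<in> S\<close>] some \<open>h > 0\<close> by (intro mult_left_mono) simp_all
    finally show ?thesis .
  qed
qed

lemma norm_le_lyapunov_functional:
  "lam > 0 \<Longrightarrow> 2 / lam * norm x \<le> lyapunov_functional \<phi> S M lam x"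
  unfolding lyapunov_functional_def by (intro mult_left_mono norm_le_trajectory_sup) simp

lemma lyapunov_functional_le:
  assumes "exp_decay_on S \<phi> r M lam" "M > 0" "lam > 0" "x \<in> cball 0 r"
  shows "lyapunov_functional \<phi> S M lam x \<le> 2 / lam * max 1 M * norm x"
  unfolding lyapunov_functional_def mult.assoc[of "2 / lam"]
  using assms by (intro mult_left_mono trajectory_sup_le) auto

lemma continuous_on_lyapunov_functional:
  assumes "S_unif_cont S \<phi>" "M > 0" "lam > 0"
  shows "continuous_on UNIV (lyapunov_functional \<phi> S M lam)"
  unfolding lyapunov_functional_def
  using assms by (intro continuous_intros continuous_on_trajectory_sup) auto

lemma dini_upper_lyapunov_functional:
  assumes fc: "forward_complete_sys S \<phi>" and uc: "S_unif_cont S \<phi>"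
    and decay: "exp_decay_on S \<phi> r M lam" and "M > 0" "lam > 0" "x \<in> cball 0 r" "\<sigma> \<in> S"
  shows "dini_upper \<phi> (lyapunov_functional \<phi> S M lam) \<sigma> x \<le> ereal (- norm x)"
proof -
  let ?V = "lyapunov_functional \<phi> S M lam"
  have "?V (\<phi> h x \<sigma>) \<le> exp (- (lam / 2) * h) * ?V x" if "h > 0" for h
  proof -
    have "trajectory_sup \<phi> S (lam / 2) (2 * M / lam) (\<phi> h x \<sigma>)
        \<le> exp (- (lam / 2) * h) * trajectory_sup \<phi> S (lam / 2) (2 * M / lam) x"
      using assms that by (intro trajectory_sup_flow_le[OF fc uc decay]) auto
    then have "2 / lam * trajectory_sup \<phi> S (lam / 2) (2 * M / lam) (\<phi> h x \<sigma>)
        \<le> 2 / lam * (exp (- (lam / 2) * h) * trajectory_sup \<phi> S (lam / 2) (2 * M / lam) x)"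
      using \<open>lam > 0\<close> by (intro mult_left_mono) simp_all
    then show ?thesis
      unfolding lyapunov_functional_def by (simp only: mult.left_commute)
  qed
  then have "dini_upper \<phi> ?V \<sigma> x \<le> ereal (- (lam / 2) * ?V x)"
    by (rule dini_upper_le_of_exp_decrease[where V = ?V and \<phi> = \<phi>])
  moreover have "- (lam / 2) * ?V x \<le> - norm x"
    using norm_le_trajectory_sup[of x "lam / 2" "2 * M / lam"] \<open>lam > 0\<close>
    by (simp add: lyapunov_functional_def)
  ultimately show ?thesis
    using order_trans ereal_less_eq(3) by blast
qed

lemma lyap_family_lyapunov_functional:
  assumes fc: "forward_complete_sys S \<phi>" and uc: "S_unif_cont S \<phi>"
    and M: "\<And>r. r > 0 \<Longrightarrow> M r > 0" and lam: "\<And>r. r > 0 \<Longrightarrow> lam r > 0"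
    and decay: "\<And>r. r > 0 \<Longrightarrow> exp_decay_on S \<phi> r (M r) (lam r)"
  shows "lyap_family S \<phi> M lam (\<lambda>r. lyapunov_functional \<phi> S (M r) (lam r))"
  unfolding lyap_family_def
proof (intro allI impI conjI ballI)
  fix r :: real assume "r > 0"
  note M = M[OF \<open>r > 0\<close>] and lam = lam[OF \<open>r > 0\<close>] and decay = decay[OF \<open>r > 0\<close>]
  show "continuous_on UNIV (lyapunov_functional \<phi> S (M r) (lam r))"
    using continuous_on_lyapunov_functional[OF uc M lam] .
  show "\<exists>cl>0. \<exists>cu>0. \<forall>x\<in>cball 0 r.
      cl * norm x \<le> lyapunov_functional \<phi> S (M r) (lam r) x
      \<and> lyapunov_functional \<phi> S (M r) (lam r) x \<le> cu * norm x"
  proof (intro exI conjI ballI)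
    show "2 / lam r > 0" "2 / lam r * max 1 (M r) > 0"
      using M lam by auto
    fix x :: 'x assume "x \<in> cball 0 r"
    show "2 / lam r * norm x \<le> lyapunov_functional \<phi> S (M r) (lam r) x"
      by (rule norm_le_lyapunov_functional[OF lam])
    show "lyapunov_functional \<phi> S (M r) (lam r) x \<le> 2 / lam r * max 1 (M r) * norm x"
      by (rule lyapunov_functional_le[OF decay M lam]) fact
  qed
  fix x :: 'x
  show "lyapunov_functional \<phi> S (M r) (lam r) x \<ge> 0"
    using lam by (intro order_trans[OF _ norm_le_lyapunov_functional[OF lam]]) simp
  fix \<sigma> assume "x \<in> cball 0 r" "\<sigma> \<in> S"
  then show "dini_upper \<phi> (lyapunov_functional \<phi> S (M r) (lam r)) \<sigma> x \<le> ereal (- norm x)"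
    by (rule dini_upper_lyapunov_functional[OF fc uc decay M lam])
qed simp

lemma lipschitz_on_lyapunov_functional:
  assumes "M > 0" "lam > 0" "c \<ge> 0"
    and "\<And>t x y \<sigma>. t \<in> {0..2 * M / lam} \<Longrightarrow> x \<in> B \<Longrightarrow> y \<in> B \<Longrightarrow> \<sigma> \<in> S \<Longrightarrow>
           norm (\<phi> t x \<sigma> - \<phi> t y \<sigma>) \<le> c * norm (x - y)"
  shows "(2 / lam * max 1 (exp M * c))-lipschitz_on B (lyapunov_functional \<phi> S M lam)"
proof -
  have "(max 1 (exp (lam / 2 * (2 * M / lam)) * c))-lipschitz_on B
      (trajectory_sup \<phi> S (lam / 2) (2 * M / lam))"
    using assms by (intro lipschitz_on_trajectory_sup) auto
  moreover have "lam / 2 * (2 * M / lam) = M"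
    using \<open>lam > 0\<close> by simp
  ultimately show ?thesis
    unfolding lyapunov_functional_def[abs_def] using \<open>lam > 0\<close>
    by (intro lipschitz_on_cmult_real_nonneg) simp_all
qed

lemma S_unif_lip_lipschitz_lyapunov_functional:
  assumes "S_unif_lip S \<phi>" "M > 0" "lam > 0"
  shows "\<exists>L. L-lipschitz_on UNIV (lyapunov_functional \<phi> S M lam)"
proof -
  have "2 * M / lam > 0"
    using assms by simp
  with assms(1) obtain c where "c > 0"
    and "\<forall>t\<in>{0..2 * M / lam}. \<forall>x y. \<forall>\<sigma>\<in>S. norm (\<phi> t x \<sigma> - \<phi> t y \<sigma>) \<le> c * norm (x - y)"
    unfolding S_unif_lip_def by blast
  with assms show ?thesis
    by (blast intro: lipschitz_on_lyapunov_functional less_imp_le)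
qed

lemma S_unif_lip_bdd_lipschitz_lyapunov_functional:
  assumes "S_unif_lip_bdd S \<phi>" "M > 0" "lam > 0" "bounded B"
  shows "\<exists>L. L-lipschitz_on B (lyapunov_functional \<phi> S M lam)"
proof -
  obtain R where "R > 0" and B: "B \<subseteq> cball 0 R"
    using \<open>bounded B\<close> by (auto simp: bounded_pos subset_iff)
  have "2 * M / lam > 0"
    using assms by simp
  with assms(1) \<open>R > 0\<close> obtain c where "c > 0" and "\<forall>t\<in>{0..2 * M / lam}. \<forall>x\<in>cball 0 R.
      \<forall>y\<in>cball 0 R. \<forall>\<sigma>\<in>S. norm (\<phi> t x \<sigma> - \<phi> t y \<sigma>) \<le> c * norm (x - y)"
    unfolding S_unif_lip_bdd_def by blast
  with assms B show ?thesis
    by (blast intro: lipschitz_on_lyapunov_functional less_imp_le)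
qed

end

theorem theorem5:
  fixes S :: "(real \<Rightarrow> 'q) set"
    and \<phi> :: "real \<Rightarrow> 'x::banach \<Rightarrow> (real \<Rightarrow> 'q) \<Rightarrow> 'x"
    and M lam :: "real \<Rightarrow> real"
  assumes fc: "forward_complete_sys S \<phi>"
    and uc: "S_unif_cont S \<phi>"
    and usges: "USGES S \<phi>"
    and Mpos: "\<forall>r>0. M r > 0" and lampos: "\<forall>r>0. lam r > 0"
    and bound: "\<forall>r>0. \<forall>t\<ge>0. \<forall>x\<in>cball 0 r. \<forall>\<sigma>\<in>S.
                  norm (\<phi> t x \<sigma>) \<le> M r * exp (- lam r * t) * norm x"
  shows "(\<exists>V. lyap_family S \<phi> M lam V)
       \<and> (S_unif_lip S \<phi> \<longrightarrow>
            (\<exists>V. lyap_family S \<phi> M lam V \<and> (\<forall>r>0. \<exists>L. L-lipschitz_on UNIV (V r))))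
       \<and> (S_unif_lip_bdd S \<phi> \<longrightarrow>
            (\<exists>V. lyap_family S \<phi> M lam V \<and>
                 (\<forall>r>0. \<forall>B. bounded B \<longrightarrow> (\<exists>L. L-lipschitz_on B (V r)))))"
proof -
  let ?V = "\<lambda>r. lyapunov_functional \<phi> S (M r) (lam r)"
  have decay: "\<And>r. r > 0 \<Longrightarrow> exp_decay_on S \<phi> r (M r) (lam r)"
    using bound unfolding exp_decay_on_def by blast
  have "lyap_family S \<phi> M lam ?V"
    using lyap_family_lyapunov_functional[OF usges fc uc] Mpos lampos decay by blast
  moreover have "\<forall>r>0. \<exists>L. L-lipschitz_on UNIV (?V r)" if "S_unif_lip S \<phi>"
    using S_unif_lip_lipschitz_lyapunov_functional[OF usges that] Mpos lampos by blast
  moreover have "\<forall>r>0. \<forall>B. bounded B \<longrightarrow> (\<exists>L. L-lipschitz_on B (?V r))" if "S_unif_lip_bdd S \<phi>"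
    using S_unif_lip_bdd_lipschitz_lyapunov_functional[OF usges that] Mpos lampos by blast
  ultimately show ?thesis
    by blast
qed

end
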